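(* Let $(X,\mathrm{dist})$ be a metric space and $\Sigma$ a compact metric space. Let $T(h):\Sigma\to\Sigma$, $h\ge0$, be a semigroup with $T(h)\Sigma=\Sigma$ for all $h\ge0$, and let $\{U_\sigma(t,\tau)\}_{\sigma\in\Sigma}$ be a family of processes on $X$ satisfying $U_\sigma(h+t,h+\tau)=U_{T(h)\sigma}(t,\tau)$ for all $\sigma\in\Sigma$, $h\ge0$, $t\ge\tau$. Let $S(h)(x,\sigma)=(U_\sigma(h,0)x,T(h)\sigma)$ be the skew-product semigroup on $X\times\Sigma$. Suppose the family $U_\sigma(t,\tau)$ is asymptotically closed with respect to a sequence $h_k$, and $T(h_k)$ is continuous for every $k$. Then $S(h)$ is asymptotically closed with respect to the same sequence $h_k$.
   Context: A process on $X$ is a family of maps $U(t,\tau):X\to X$, indexed by reals $t\ge\tau$, with $U(\tau,\tau)=\mathrm{id}_X$ and $U(t,\tau)=U(t,s)U(s,\tau)$ for $t\ge s\ge\tau$. The family $U_\sigma(t,\tau)$ is asymptotically closed with respect to a (finite with at least two terms, or infinite) sequence of times $0=h_0<h_1<h_2<\cdots$ if: whenever $\sigma_n\to\sigma\in\Sigma$ and $U_{\sigma_n}(h_k,0)x_n\to\xi^k\in X$ as $n\to\infty$ for every $k$, then $U_\sigma(h_k,0)\xi^0=\xi^k$ for every $k$. A semigroup $V(h)$ on a metric space $Y$ is asymptotically closed with respect to such a sequence $h_k$ if whenever $V(h_k)y_n\to\eta^k\in Y$ as $n\to\infty$ for every $k$, then $V(h_k)\eta^0=\eta^k$ for every $k$.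 $X\times\Sigma$ carries the product metric. *)

theory Defs
  imports "HOL-Analysis.Analysis"
begin

definition time_seq :: "(nat \<Rightarrow> real) \<Rightarrow> nat set \<Rightarrow> bool" where
  "time_seq h K \<longleftrightarrow> h 0 = 0 \<and> strict_mono_on K h \<and>
     ((\<exists>N\<ge>2. K = {..<N}) \<or> K = UNIV)"

definition is_process :: "(real \<Rightarrow> real \<Rightarrow> 'a \<Rightarrow> 'a) \<Rightarrow> bool" where
  "is_process U \<longleftrightarrow> (\<forall>tau. U tau tau = id) \<and>
     (\<forall>t s tau. tau \<le> s \<and> s \<le> t \<longrightarrow> U t tau = U t s \<circ> U s tau)"

definition is_semigroup_on :: "'b set \<Rightarrow> (real \<Rightarrow> 'b \<Rightarrow> 'b) \<Rightarrow> bool" where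
  "is_semigroup_on Sig T \<longleftrightarrow> (\<forall>h\<ge>0. T h ` Sig \<subseteq> Sig) \<and> (\<forall>s\<in>Sig. T 0 s = s) \<and>
     (\<forall>h1\<ge>0. \<forall>h2\<ge>0. \<forall>s\<in>Sig. T (h1 + h2) s = T h1 (T h2 s))"

definition family_asymp_closed ::
  "'b::metric_space set \<Rightarrow> ('b \<Rightarrow> real \<Rightarrow> real \<Rightarrow> 'a::metric_space \<Rightarrow> 'a) \<Rightarrow> (nat \<Rightarrow> real) \<Rightarrow> nat set \<Rightarrow> bool" where
  "family_asymp_closed Sig U h K \<longleftrightarrow>
     (\<forall>(\<sigma>s :: nat \<Rightarrow> 'b) \<sigma> (xs :: nat \<Rightarrow> 'a) (\<xi> :: nat \<Rightarrow> 'a).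
        (\<forall>n. \<sigma>s n \<in> Sig) \<and> \<sigma> \<in> Sig \<and> \<sigma>s \<longlonglongrightarrow> \<sigma> \<and>
        (\<forall>k\<in>K. (\<lambda>n. U (\<sigma>s n) (h k) 0 (xs n)) \<longlonglongrightarrow> \<xi> k)
        \<longrightarrow> (\<forall>k\<in>K. U \<sigma> (h k) 0 (\<xi> 0) = \<xi> k))"

definition semigroup_asymp_closed ::
  "'c::metric_space set \<Rightarrow> (real \<Rightarrow> 'c \<Rightarrow> 'c) \<Rightarrow> (nat \<Rightarrow> real) \<Rightarrow> nat set \<Rightarrow> bool" where
  "semigroup_asymp_closed Y V h K \<longleftrightarrow>
     (\<forall>(ys :: nat \<Rightarrow> 'c) (\<eta> :: nat \<Rightarrow> 'c).
        (\<forall>n. ys n \<in> Y) \<and> (\<forall>k\<in>K. \<eta> k \<in> Y) \<and>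
        (\<forall>k\<in>K. (\<lambda>n. V (h k) (ys n)) \<longlonglongrightarrow> \<eta> k)
        \<longrightarrow> (\<forall>k\<in>K. V (h k) (\<eta> 0) = \<eta> k))"

definition skew_product :: "('b \<Rightarrow> real \<Rightarrow> real \<Rightarrow> 'a \<Rightarrow> 'a) \<Rightarrow> (real \<Rightarrow> 'b \<Rightarrow> 'b) \<Rightarrow> real \<Rightarrow> 'a \<times> 'b \<Rightarrow> 'a \<times> 'b" where
  "skew_product U T h = (\<lambda>(x, \<sigma>). (U \<sigma> h 0 x, T h \<sigma>))"

end

theory Submission
  imports Defs
begin

text \<open>Write a sequence in X \<times> \<Sigma> as (x_n, \<sigma>_n). The first components of S(h_k)(x_n, \<sigma>_n)
are U_{\<sigma>_n}(h_k, 0) x_n, and since h_0 = 0 the case k = 0 gives (x_n, \<sigma>_n) \<rightarrow> \<eta>^0; so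
asymptotic closedness of the family U_\<sigma> yields the first components of S(h_k) \<eta>^0 = \<eta>^k.
The second components T(h_k) \<sigma>_n converge both to the second component of \<eta>^k and, by
continuity of T(h_k), to T(h_k) applied to the second component of \<eta>^0.\<close>

lemma time_seq_start:
  assumes "time_seq h K"
  shows "h 0 = 0" and "0 \<in> K"
  using assms unfolding time_seq_def by auto

lemma skew_product_Pair: "skew_product U T t (x, \<sigma>) = (U \<sigma> t 0 x, T t \<sigma>)"
  by (simp add: skew_product_def)

lemma semigroup_asymp_closed_skew_product:
  fixes Sig :: "'b::metric_space set" and U :: "'b \<Rightarrow> real \<Rightarrow> real \<Rightarrow> 'a::metric_space \<Rightarrow> 'a"
  assumes h0: "h 0 = 0" and K0: "0 \<in> K"
    and U0: "\<forall>\<sigma>\<in>Sig. U \<sigma> 0 0 = id" and T0: "\<forall>\<sigma>\<in>Sig. T 0 \<sigma> = \<sigma>"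
    and U_closed: "family_asymp_closed Sig U h K"
    and T_cont: "\<forall>k\<in>K. continuous_on Sig (T (h k))"
  shows "semigroup_asymp_closed (UNIV \<times> Sig) (skew_product U T) h K"
  unfolding semigroup_asymp_closed_def
proof (intro allI impI)
  fix ys \<eta> :: "nat \<Rightarrow> 'a \<times> 'b"
  assume "(\<forall>n. ys n \<in> UNIV \<times> Sig) \<and> (\<forall>k\<in>K. \<eta> k \<in> UNIV \<times> Sig) \<and>
    (\<forall>k\<in>K. (\<lambda>n. skew_product U T (h k) (ys n)) \<longlonglongrightarrow> \<eta> k)"
  then have ys_Sig: "\<And>n. snd (ys n) \<in> Sig" and \<eta>_Sig: "\<And>k. k \<in> K \<Longrightarrow> snd (\<eta> k) \<in> Sig"
    and lim: "\<And>k. k \<in> K \<Longrightarrow> (\<lambda>n. skew_product U T (h k) (ys n)) \<longlonglongrightarrow> \<eta> k"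
    by (auto simp: mem_Times_iff)
  define xs ss where "xs n = fst (ys n)" and "ss n = snd (ys n)" for n
  then have ys: "ys = (\<lambda>n. (xs n, ss n))"
    by simp
  obtain x0 \<sigma>0 where \<eta>0: "\<eta> 0 = (x0, \<sigma>0)"
    by (cases "\<eta> 0")
  have ss_Sig: "ss n \<in> Sig" for n
    using ys_Sig by (simp add: ys)
  have \<sigma>0_Sig: "\<sigma>0 \<in> Sig"
    using \<eta>_Sig[OF K0] by (simp add: \<eta>0)
  have lim_k: "(\<lambda>n. U (ss n) (h k) 0 (xs n)) \<longlonglongrightarrow> fst (\<eta> k)"
    "(\<lambda>n. T (h k) (ss n)) \<longlonglongrightarrow> snd (\<eta> k)" if "k \<in> K" for k
    using tendsto_fst[OF lim[OF that]] tendsto_snd[OF lim[OF that]]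
    by (simp_all add: ys skew_product_Pair)
  have "(\<lambda>n. U (ss n) (h 0) 0 (xs n)) = xs" "(\<lambda>n. T (h 0) (ss n)) = ss"
    using U0 T0 ss_Sig by (simp_all add: h0)
  then have "ss \<longlonglongrightarrow> \<sigma>0"
    using lim_k[OF K0] by (simp add: \<eta>0)
  then have U_at_\<eta>0: "U \<sigma>0 (h k) 0 x0 = fst (\<eta> k)" if "k \<in> K" for k
    using U_closed[unfolded family_asymp_closed_def, rule_format, of ss \<sigma>0 xs "fst \<circ> \<eta>"]
      ss_Sig \<sigma>0_Sig lim_k(1) that by (simp add: \<eta>0)
  have T_at_\<eta>0: "T (h k) \<sigma>0 = snd (\<eta> k)" if "k \<in> K" for k
  proof -
    have "(\<lambda>n. T (h k) (ss n)) \<longlonglongrightarrow> T (h k) \<sigma>0"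
      using T_cont that \<open>ss \<longlonglongrightarrow> \<sigma>0\<close> \<sigma>0_Sig ss_Sig
      by (intro continuous_on_tendsto_compose[of Sig "T (h k)"]) auto
    then show ?thesis
      using lim_k(2)[OF that] LIMSEQ_unique by blast
  qed
  show "\<forall>k\<in>K. skew_product U T (h k) (\<eta> 0) = \<eta> k"
    using U_at_\<eta>0 T_at_\<eta>0 by (simp add: \<eta>0 skew_product_Pair prod_eq_iff)
qed

theorem proposition6p5:
  fixes Sig :: "'b::metric_space set"
    and T :: "real \<Rightarrow> 'b \<Rightarrow> 'b"
    and U :: "'b \<Rightarrow> real \<Rightarrow> real \<Rightarrow> 'a::metric_space \<Rightarrow> 'a"
    and h :: "nat \<Rightarrow> real" and K :: "nat set"
  assumes "compact Sig"
    and "is_semigroup_on Sig T"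
    and "\<forall>t\<ge>0. T t ` Sig = Sig"
    and "\<forall>\<sigma>\<in>Sig. is_process (U \<sigma>)"
    and "\<forall>\<sigma>\<in>Sig. \<forall>s\<ge>0. \<forall>t \<tau>. \<tau> \<le> t \<longrightarrow> U \<sigma> (s + t) (s + \<tau>) = U (T s \<sigma>) t \<tau>"
    and "time_seq h K"
    and "family_asymp_closed Sig U h K"
    and "\<forall>k\<in>K. continuous_on Sig (T (h k))"
  shows "semigroup_asymp_closed (UNIV \<times> Sig) (skew_product U T) h K"
proof (rule semigroup_asymp_closed_skew_product)
  show "h 0 = 0" "0 \<in> K"
    using time_seq_start \<open>time_seq h K\<close> by blast+
  show "\<forall>\<sigma>\<in>Sig. U \<sigma> 0 0 = id"
    using \<open>\<forall>\<sigma>\<in>Sig. is_process (U \<sigma>)\<close> by (simp add: is_process_def)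
  show "\<forall>\<sigma>\<in>Sig. T 0 \<sigma> = \<sigma>"
    using \<open>is_semigroup_on Sig T\<close> by (simp add: is_semigroup_on_def)
qed (fact \<open>family_asymp_closed Sig U h K\<close> \<open>\<forall>k\<in>K. continuous_on Sig (T (h k))\<close>)+

end
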